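(* Fix $\gamma>0$ and a realisation of the training data. Let $\mathcal A_n$ be any maximal subset of $[n]$ such that the vectors $(\|1_{\mathcal X}\|_{\mathcal H}^2,1,\ldots,1)^\top\in\mathbb R^{n+1}$ and $(1,k(X_i,X_1),\ldots,k(X_i,X_n))^\top\in\mathbb R^{n+1}$, $i\in\mathcal A_n$, are linearly independent. Let $\bar k(y)=\frac1n\sum_{i=1}^nk(X_i,y)$, $\tilde k(x,y)=k(x,y)-\bar k(y)$, and for $\beta\in\mathbb R^{\mathcal A_n}$ let $f_\beta(x)=\sum_{i\in\mathcal A_n}\tilde k(x,X_i)\beta_i$. Then $\beta\mapsto\ell_{n,\gamma}(f_\beta)$ is strongly convex on $\mathbb R^{\mathcal A_n}$, and writing $\hat\beta$ for its unique minimiser, $f_{\hat\beta}$ is the unique minimiser of $f\mapsto\ell_{n,\gamma}(f)$ over $f\in\mathcal H$.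
   Context: Let $\mathcal X$ be a locally compact metric space in which every open set is $\sigma$-compact. Let $k:\mathcal X\times\mathcal X\to\mathbb R$ be a continuous, symmetric, positive semidefinite kernel with RKHS $\mathcal H$, and assume $k-\delta$ is positive semidefinite for some $\delta>0$, so the constant function $1_{\mathcal X}\in\mathcal H$. Data: points $X_1,\ldots,X_n\in\mathcal X$, times $T_i\in(0,\infty)$, indicators $I_i\in\{0,1\}$. Define $N_i(t)=\mathbb 1\{T_i\le t,\ I_i=0\}$, $R_i(t)=\mathbb 1\{T_i\ge t\}$, $S_n(f,t)=\frac1n\sum_{i=1}^nR_i(t)e^{f(X_i)}$, $P_n(f)=\frac1n\sum_{i=1}^nf(X_i)$, $\ell_n(f)=\frac1n\sum_{i=1}^n N_i(1)\log S_n(f,T_i)-\frac1n\sum_{i=1}^n f(X_i)N_i(1)$, and for $\gamma>0$ the penalised objective $\ell_{n,\gamma}(f)=\ell_n(f)+\gamma\|f-P_n(f)1_{\mathcal X}\|_{\mathcal H}^2+\gamma P_n(f)^2$ for $f\in\mathcal H$. *)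

theory Defs
  imports "HOL-Analysis.Analysis"
begin

definition psd_kernel :: "('a \<Rightarrow> 'a \<Rightarrow> real) \<Rightarrow> bool" where
  "psd_kernel k \<longleftrightarrow>
     (\<forall>(m::nat) (x::nat \<Rightarrow> 'a) (c::nat \<Rightarrow> real).
        (\<Sum>i<m. \<Sum>j<m. c i * c j * k (x i) (x j)) \<ge> 0)"

definition sigma_compact :: "'a::topological_space set \<Rightarrow> bool" where
  "sigma_compact U \<longleftrightarrow> (\<exists>C::nat \<Rightarrow> 'a set. (\<forall>m. compact (C m)) \<and> U = (\<Union>m. C m))"

definition rkhs :: "('a \<Rightarrow> 'a \<Rightarrow> real) \<Rightarrow> ('a \<Rightarrow> real) set
                     \<Rightarrow> (('a \<Rightarrow> real) \<Rightarrow> ('a \<Rightarrow> real) \<Rightarrow> real) \<Rightarrow> bool" where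
  "rkhs k H ip \<longleftrightarrow>
     (\<lambda>_. 0) \<in> H \<and>
     (\<forall>f\<in>H. \<forall>g\<in>H. \<forall>a b. (\<lambda>x. a * f x + b * g x) \<in> H) \<and>
     (\<forall>f\<in>H. \<forall>g\<in>H. ip f g = ip g f) \<and>
     (\<forall>f\<in>H. \<forall>g\<in>H. \<forall>h\<in>H. \<forall>a b. ip (\<lambda>x. a * f x + b * g x) h = a * ip f h + b * ip g h) \<and>
     (\<forall>f\<in>H. ip f f \<ge> 0) \<and>
     (\<forall>f\<in>H. ip f f = 0 \<longrightarrow> f = (\<lambda>_. 0)) \<and>
     (\<forall>s::nat \<Rightarrow> ('a \<Rightarrow> real).
        (\<forall>m. s m \<in> H) \<and>
        (\<forall>e>0. \<exists>N. \<forall>m\<ge>N. \<forall>p\<ge>N. ip (\<lambda>x. s m x - s p x) (\<lambda>x. s m x - s p x) < e)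
        \<longrightarrow> (\<exists>f\<in>H. \<forall>e>0. \<exists>N. \<forall>m\<ge>N. ip (\<lambda>x. s m x - f x) (\<lambda>x. s m x - f x) < e)) \<and>
     (\<forall>y. (\<lambda>x. k x y) \<in> H) \<and>
     (\<forall>f\<in>H. \<forall>y. ip f (\<lambda>x. k x y) = f y)"

definition hnorm2 :: "(('a \<Rightarrow> real) \<Rightarrow> ('a \<Rightarrow> real) \<Rightarrow> real) \<Rightarrow> ('a \<Rightarrow> real) \<Rightarrow> real" where
  "hnorm2 ip f = ip f f"

definition Nproc :: "(nat \<Rightarrow> real) \<Rightarrow> (nat \<Rightarrow> nat) \<Rightarrow> nat \<Rightarrow> real \<Rightarrow> real" where
  "Nproc T I i t = (if T i \<le> t \<and> I i = 0 then 1 else 0)"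

definition Rproc :: "(nat \<Rightarrow> real) \<Rightarrow> nat \<Rightarrow> real \<Rightarrow> real" where
  "Rproc T i t = (if T i \<ge> t then 1 else 0)"

(* data indexed by i \<in> {0..<n} (i.e. [n] relabelled) *)
definition S_n :: "nat \<Rightarrow> (nat \<Rightarrow> 'a) \<Rightarrow> (nat \<Rightarrow> real) \<Rightarrow> ('a \<Rightarrow> real) \<Rightarrow> real \<Rightarrow> real" where
  "S_n n X T f t = (1 / real n) * (\<Sum>i<n. Rproc T i t * exp (f (X i)))"

definition P_n :: "nat \<Rightarrow> (nat \<Rightarrow> 'a) \<Rightarrow> ('a \<Rightarrow> real) \<Rightarrow> real" where
  "P_n n X f = (1 / real n) * (\<Sum>i<n. f (X i))"

definition ell_n :: "nat \<Rightarrow> (nat \<Rightarrow> 'a) \<Rightarrow> (nat \<Rightarrow> real) \<Rightarrow> (nat \<Rightarrow> nat) \<Rightarrow> ('a \<Rightarrow> real) \<Rightarrow> real" where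
  "ell_n n X T I f =
     (1 / real n) * (\<Sum>i<n. Nproc T I i 1 * ln (S_n n X T f (T i)))
     - (1 / real n) * (\<Sum>i<n. f (X i) * Nproc T I i 1)"

definition ell_pen ::
  "(('a \<Rightarrow> real) \<Rightarrow> ('a \<Rightarrow> real) \<Rightarrow> real) \<Rightarrow> real \<Rightarrow> nat \<Rightarrow> (nat \<Rightarrow> 'a) \<Rightarrow> (nat \<Rightarrow> real)
     \<Rightarrow> (nat \<Rightarrow> nat) \<Rightarrow> ('a \<Rightarrow> real) \<Rightarrow> real" where
  "ell_pen ip \<gamma> n X T I f =
     ell_n n X T I f
     + \<gamma> * hnorm2 ip (\<lambda>x. f x - P_n n X f * 1)
     + \<gamma> * (P_n n X f)\<^sup>2"

(* the vectors of R^{n+1}, components indexed 0..n *)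
definition v0 :: "(('a \<Rightarrow> real) \<Rightarrow> ('a \<Rightarrow> real) \<Rightarrow> real) \<Rightarrow> nat \<Rightarrow> real" where
  "v0 ip j = (if j = 0 then hnorm2 ip (\<lambda>_. 1) else 1)"

definition wvec :: "('a \<Rightarrow> 'a \<Rightarrow> real) \<Rightarrow> (nat \<Rightarrow> 'a) \<Rightarrow> nat \<Rightarrow> nat \<Rightarrow> real" where
  "wvec k X i j = (if j = 0 then 1 else k (X i) (X (j - 1)))"

definition indep_family ::
  "(('a \<Rightarrow> real) \<Rightarrow> ('a \<Rightarrow> real) \<Rightarrow> real) \<Rightarrow> ('a \<Rightarrow> 'a \<Rightarrow> real) \<Rightarrow> nat \<Rightarrow> (nat \<Rightarrow> 'a)
     \<Rightarrow> nat set \<Rightarrow> bool" where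
  "indep_family ip k n X A \<longleftrightarrow>
     (\<forall>(c0::real) (c::nat \<Rightarrow> real).
        (\<forall>j\<le>n. c0 * v0 ip j + (\<Sum>i\<in>A. c i * wvec k X i j) = 0)
        \<longrightarrow> c0 = 0 \<and> (\<forall>i\<in>A. c i = 0))"

definition kbar :: "('a \<Rightarrow> 'a \<Rightarrow> real) \<Rightarrow> nat \<Rightarrow> (nat \<Rightarrow> 'a) \<Rightarrow> 'a \<Rightarrow> real" where
  "kbar k n X y = (1 / real n) * (\<Sum>i<n. k (X i) y)"

definition ktilde :: "('a \<Rightarrow> 'a \<Rightarrow> real) \<Rightarrow> nat \<Rightarrow> (nat \<Rightarrow> 'a) \<Rightarrow> 'a \<Rightarrow> 'a \<Rightarrow> real" where
  "ktilde k n X x y = k x y - kbar k n X y"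

(* f_beta, for beta \<in> R^A represented as nat \<Rightarrow> real (only values on A matter) *)
definition f_beta :: "('a \<Rightarrow> 'a \<Rightarrow> real) \<Rightarrow> nat \<Rightarrow> (nat \<Rightarrow> 'a) \<Rightarrow> nat set \<Rightarrow> (nat \<Rightarrow> real) \<Rightarrow> 'a \<Rightarrow> real" where
  "f_beta k n X A \<beta> x = (\<Sum>i\<in>A. ktilde k n X x (X i) * \<beta> i)"

(* R^A as the functions nat \<Rightarrow> real vanishing outside A *)
definition coords :: "nat set \<Rightarrow> (nat \<Rightarrow> real) set" where
  "coords A = {\<beta>. \<forall>i. i \<notin> A \<longrightarrow> \<beta> i = 0}"

definition strongly_convex_coords :: "nat set \<Rightarrow> ((nat \<Rightarrow> real) \<Rightarrow> real) \<Rightarrow> bool" where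
  "strongly_convex_coords A g \<longleftrightarrow>
     (\<exists>\<mu>>0. \<forall>\<beta>\<in>coords A. \<forall>\<beta>'\<in>coords A. \<forall>t::real. 0 \<le> t \<and> t \<le> 1 \<longrightarrow>
        g (\<lambda>i. t * \<beta> i + (1 - t) * \<beta>' i)
          \<le> t * g \<beta> + (1 - t) * g \<beta>' - \<mu> / 2 * t * (1 - t) * (\<Sum>i\<in>A. (\<beta> i - \<beta>' i)\<^sup>2))"

end

theory Submission
  imports Defs
begin

(*
  Every f in H splits as f = a + f_beta + r, where a + f_beta is the orthogonal projection of f
  onto the span V of 1 and k(., X i), i in A, and r is orthogonal to V. By maximality of A every
  k(., X j), j < n, lies in V, so r vanishes at all data points. As l_n only sees the values at
  the data points and is invariant under adding constants, and P_n f_beta = 0, this gives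

    l_{n,gamma}(f) = l_{n,gamma}(f_beta) + gamma |r|^2 + gamma a^2.

  On the other hand beta |-> l_n(f_beta) is convex (log-sum-exp), and beta |-> |f_beta|^2 is a
  positive definite quadratic form because 1 and the k(., X i), i in A, are linearly independent.
  Hence beta |-> l_{n,gamma}(f_beta) is strongly convex and coercive, so it has a unique
  minimiser, and by the identity above the corresponding f_beta is the unique minimiser over H.
*)

section \<open>Minimisation over finitely supported coordinate vectors\<close>

lemma continuous_on_coordinate [continuous_intros]: "continuous_on S (\<lambda>x::nat \<Rightarrow> real. x i)"
  by (rule continuous_on_subset[OF continuous_on_product_coordinates]) simp

lemma compact_coords_box:
  "compact {\<beta>::nat \<Rightarrow> real. \<forall>i. (i \<in> A \<longrightarrow> \<bar>\<beta> i\<bar> \<le> R) \<and> (i \<notin> A \<longrightarrow> \<beta> i = 0)}"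
proof -
  have "{\<beta>::nat \<Rightarrow> real. \<forall>i. (i \<in> A \<longrightarrow> \<bar>\<beta> i\<bar> \<le> R) \<and> (i \<notin> A \<longrightarrow> \<beta> i = 0)}
      = PiE UNIV (\<lambda>i. if i \<in> A then {-R..R} else {0})"
    by (auto simp: PiE_def Pi_def abs_le_iff split: if_splits)
  moreover have "compactin (product_topology (\<lambda>_. euclidean) UNIV)
      (PiE UNIV (\<lambda>i. if i \<in> A then {-R..R} else ({0}::real set)))"
    by (subst compactin_PiE) auto
  ultimately show ?thesis
    by (simp add: euclidean_product_topology)
qed

lemma square_le_sum_squares:
  fixes \<beta> :: "nat \<Rightarrow> real"
  shows "finite A \<Longrightarrow> i \<in> A \<Longrightarrow> (\<beta> i)\<^sup>2 \<le> (\<Sum>j\<in>A. (\<beta> j)\<^sup>2)"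
  using member_le_sum[of i A "\<lambda>j. (\<beta> j)\<^sup>2"] by simp

lemma coords_coercive_attains_min:
  fixes h :: "(nat \<Rightarrow> real) \<Rightarrow> real"
  assumes "finite A" and cont: "continuous_on (coords A) h" and "c > 0"
    and bound: "\<forall>\<beta>\<in>coords A. a + c * (\<Sum>i\<in>A. (\<beta> i)\<^sup>2) \<le> h \<beta>"
  shows "\<exists>\<beta>\<in>coords A. \<forall>\<beta>'\<in>coords A. h \<beta> \<le> h \<beta>'"
proof -
  define R where "R = (\<bar>h (\<lambda>_. 0) - a\<bar> + 1) / c + 1"
  have "R \<ge> 1" and "c * R \<ge> \<bar>h (\<lambda>_. 0) - a\<bar> + 1"
    using \<open>c > 0\<close> by (simp_all add: R_def field_simps)
  moreover have "c * R \<le> c * R\<^sup>2"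
    using \<open>R \<ge> 1\<close> \<open>c > 0\<close> by (simp add: power2_eq_square)
  ultimately have far: "h (\<lambda>_. 0) < a + c * R\<^sup>2"
    by linarith
  define K where "K = {\<beta>::nat \<Rightarrow> real. \<forall>i. (i \<in> A \<longrightarrow> \<bar>\<beta> i\<bar> \<le> R) \<and> (i \<notin> A \<longrightarrow> \<beta> i = 0)}"
  have "K \<subseteq> coords A" and zero_K: "(\<lambda>_. 0) \<in> K"
    using \<open>R \<ge> 1\<close> by (auto simp: K_def coords_def)
  moreover have "compact K"
    unfolding K_def by (rule compact_coords_box)
  ultimately obtain \<beta>0 where "\<beta>0 \<in> K" and min_K: "\<forall>\<beta>\<in>K. h \<beta>0 \<le> h \<beta>"
    using continuous_attains_inf[of K h] continuous_on_subset[OF cont] by blast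
  have "h \<beta>0 \<le> h \<beta>" if \<beta>: "\<beta> \<in> coords A" "\<beta> \<notin> K" for \<beta>
  proof -
    have "\<not> (\<forall>i. (i \<in> A \<longrightarrow> \<bar>\<beta> i\<bar> \<le> R) \<and> (i \<notin> A \<longrightarrow> \<beta> i = 0))"
      using \<beta>(2) by (simp add: K_def)
    then obtain i where "i \<in> A" "R < \<bar>\<beta> i\<bar>"
      using \<beta>(1) by (auto simp: coords_def not_le)
    then have "R\<^sup>2 \<le> (\<beta> i)\<^sup>2"
      using \<open>R \<ge> 1\<close> power_mono[of R "\<bar>\<beta> i\<bar>" 2] by simp
    also have "\<dots> \<le> (\<Sum>j\<in>A. (\<beta> j)\<^sup>2)"
      using \<open>finite A\<close> \<open>i \<in> A\<close> by (rule square_le_sum_squares)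
    finally have "c * R\<^sup>2 \<le> c * (\<Sum>j\<in>A. (\<beta> j)\<^sup>2)"
      using \<open>c > 0\<close> by simp
    moreover have "a + c * (\<Sum>j\<in>A. (\<beta> j)\<^sup>2) \<le> h \<beta>"
      using bound \<beta>(1) by blast
    ultimately have "a + c * R\<^sup>2 \<le> h \<beta>"
      by linarith
    then show ?thesis
      using far min_K zero_K by fastforce
  qed
  then show ?thesis
    using \<open>\<beta>0 \<in> K\<close> \<open>K \<subseteq> coords A\<close> min_K by blast
qed

lemma compact_coords_unit_sphere:
  assumes "finite B"
  shows "compact (coords B \<inter> {c. (\<Sum>i\<in>B. (c i)\<^sup>2) = 1})"
proof -
  have "\<bar>c i\<bar> \<le> 1" if "(\<Sum>i\<in>B. (c i)\<^sup>2) = 1" "i \<in> B" for c :: "nat \<Rightarrow> real" and i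
    using square_le_sum_squares[OF assms that(2), of c] that(1) by (simp add: abs_square_le_1)
  then have "coords B \<inter> {c. (\<Sum>i\<in>B. (c i)\<^sup>2) = 1}
      = {c. \<forall>i. (i \<in> B \<longrightarrow> \<bar>c i\<bar> \<le> 1) \<and> (i \<notin> B \<longrightarrow> c i = 0)} \<inter> {c. (\<Sum>i\<in>B. (c i)\<^sup>2) = 1}"
    by (auto simp: coords_def)
  then show ?thesis
    by (simp add: compact_Int_closed compact_coords_box closed_Collect_eq continuous_intros)
qed

lemma coords_homogeneous_lower_bound:
  fixes q :: "(nat \<Rightarrow> real) \<Rightarrow> real"
  assumes "finite B" and homogeneous: "\<forall>c\<in>coords B. \<forall>s. q (\<lambda>i. s * c i) = s\<^sup>2 * q c"
    and sphere: "\<forall>c\<in>coords B. (\<Sum>i\<in>B. (c i)\<^sup>2) = 1 \<longrightarrow> m \<le> q c"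
    and "c \<in> coords B"
  shows "m * (\<Sum>i\<in>B. (c i)\<^sup>2) \<le> q c"
proof -
  define s where "s = sqrt (\<Sum>i\<in>B. (c i)\<^sup>2)"
  have s2: "s\<^sup>2 = (\<Sum>i\<in>B. (c i)\<^sup>2)"
    by (simp add: s_def sum_nonneg)
  show ?thesis
  proof (cases "s = 0")
    case True
    then have "c = (\<lambda>i. 0 * c i)"
      using s2 \<open>finite B\<close> \<open>c \<in> coords B\<close> by (auto simp: coords_def sum_nonneg_eq_0_iff)
    then have "q c = 0"
      using homogeneous \<open>c \<in> coords B\<close> by (metis mult_zero_left zero_power2)
    then show ?thesis
      using s2 True by simp
  next
    case False
    define d where "d = (\<lambda>i. c i / s)"
    have "d \<in> coords B"
      using \<open>c \<in> coords B\<close> by (simp add: coords_def d_def)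
    moreover have "(\<Sum>i\<in>B. (d i)\<^sup>2) = 1"
      using s2 False by (simp add: d_def power_divide flip: sum_divide_distrib s2)
    ultimately have "m \<le> q d"
      using sphere by blast
    moreover have "c = (\<lambda>i. s * d i)"
      using False by (simp add: d_def)
    then have "q c = s\<^sup>2 * q d"
      using homogeneous \<open>d \<in> coords B\<close> by simp
    ultimately show ?thesis
      using s2 mult_right_mono[of m "q d" "s\<^sup>2"] by (simp add: mult.commute sum_nonneg)
  qed
qed

lemma coords_quadratic_form_lower_bound:
  fixes q :: "(nat \<Rightarrow> real) \<Rightarrow> real"
  assumes "finite B" and cont: "continuous_on (coords B) q"
    and homogeneous: "\<forall>c\<in>coords B. \<forall>s. q (\<lambda>i. s * c i) = s\<^sup>2 * q c"
    and positive: "\<forall>c\<in>coords B. (\<exists>i\<in>B. c i \<noteq> 0) \<longrightarrow> q c > 0"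
  shows "\<exists>l>0. \<forall>c\<in>coords B. l * (\<Sum>i\<in>B. (c i)\<^sup>2) \<le> q c"
proof (cases "B = {}")
  case True
  then show ?thesis
    using coords_homogeneous_lower_bound[OF assms(1) homogeneous, of 1] by (intro exI[of _ 1]) auto
next
  case False
  let ?S = "coords B \<inter> {c. (\<Sum>i\<in>B. (c i)\<^sup>2) = 1}"
  obtain b where "b \<in> B"
    using False by blast
  have "(\<Sum>i\<in>B. (if i = b then 1 else 0)\<^sup>2) = (\<Sum>i\<in>B. if i = b then 1 else (0::real))"
    by (rule sum.cong) auto
  then have "(\<lambda>i. if i = b then 1 else 0) \<in> ?S"
    using \<open>b \<in> B\<close> \<open>finite B\<close> by (simp add: coords_def)
  then obtain c0 where "c0 \<in> ?S" and min: "\<forall>c\<in>?S. q c0 \<le> q c"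
    using continuous_attains_inf[OF compact_coords_unit_sphere[OF \<open>finite B\<close>] _ continuous_on_subset[OF cont]]
    by blast
  moreover have "\<exists>i\<in>B. c0 i \<noteq> 0"
  proof (rule ccontr)
    assume "\<not> (\<exists>i\<in>B. c0 i \<noteq> 0)"
    then show False
      using \<open>c0 \<in> ?S\<close> by simp
  qed
  ultimately have "q c0 > 0"
    using positive by blast
  then show ?thesis
    using coords_homogeneous_lower_bound[OF assms(1) homogeneous, of "q c0"] min by blast
qed

lemma strongly_convex_coords_unique_min:
  assumes "finite A" and "strongly_convex_coords A g"
    and "\<beta>1 \<in> coords A" "\<forall>\<beta>\<in>coords A. g \<beta>1 \<le> g \<beta>"
    and "\<beta>2 \<in> coords A" "\<forall>\<beta>\<in>coords A. g \<beta>2 \<le> g \<beta>"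
  shows "\<beta>1 = \<beta>2"
proof -
  obtain \<mu> where "\<mu> > 0" and sc: "\<forall>\<beta>\<in>coords A. \<forall>\<beta>'\<in>coords A. \<forall>t::real. 0 \<le> t \<and> t \<le> 1 \<longrightarrow>
      g (\<lambda>i. t * \<beta> i + (1 - t) * \<beta>' i)
        \<le> t * g \<beta> + (1 - t) * g \<beta>' - \<mu> / 2 * t * (1 - t) * (\<Sum>i\<in>A. (\<beta> i - \<beta>' i)\<^sup>2)"
    using assms(2) unfolding strongly_convex_coords_def by blast
  define m where "m = (\<lambda>i. 1/2 * \<beta>1 i + (1 - 1/2) * \<beta>2 i)"
  have "m \<in> coords A"
    using assms(3,5) by (auto simp: coords_def m_def)
  moreover have "g m \<le> 1/2 * g \<beta>1 + (1 - 1/2) * g \<beta>2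
      - \<mu> / 2 * (1/2) * (1 - 1/2) * (\<Sum>i\<in>A. (\<beta>1 i - \<beta>2 i)\<^sup>2)"
    using sc[rule_format, OF assms(3,5), of "1/2"] unfolding m_def by simp
  ultimately have "\<mu> / 8 * (\<Sum>i\<in>A. (\<beta>1 i - \<beta>2 i)\<^sup>2) \<le> 0"
    using assms(4,6) by fastforce
  then have "(\<Sum>i\<in>A. (\<beta>1 i - \<beta>2 i)\<^sup>2) = 0"
    using \<open>\<mu> > 0\<close> by (simp add: mult_le_0_iff antisym sum_nonneg)
  then show ?thesis
    using assms(1,3,5) by (auto simp: coords_def fun_eq_iff sum_nonneg_eq_0_iff)
qed

section \<open>The Cox partial log-likelihood\<close>

lemma ln_sum_exp_convex:
  fixes w a b :: "'j \<Rightarrow> real"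
  assumes "finite J" and w: "\<forall>j\<in>J. 0 \<le> w j"
    and Sa: "0 < (\<Sum>j\<in>J. w j * exp (a j))" and Sb: "0 < (\<Sum>j\<in>J. w j * exp (b j))"
    and t: "0 \<le> t" "t \<le> 1"
  shows "ln (\<Sum>j\<in>J. w j * exp (t * a j + (1 - t) * b j))
    \<le> t * ln (\<Sum>j\<in>J. w j * exp (a j)) + (1 - t) * ln (\<Sum>j\<in>J. w j * exp (b j))"
proof -
  define P where "P = (\<Sum>j\<in>J. w j * exp (a j))"
  define Q where "Q = (\<Sum>j\<in>J. w j * exp (b j))"
  define L where "L = t * ln P + (1 - t) * ln Q"
  have "P > 0" "Q > 0"
    using Sa Sb by (simp_all add: P_def Q_def)
  have termwise: "exp (t * a j + (1 - t) * b j) \<le> exp L * (t * (exp (a j) / P) + (1 - t) * (exp (b j) / Q))"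
    for j
  proof -
    have "exp (t * a j + (1 - t) * b j) = exp L * exp (t * (a j - ln P) + (1 - t) * (b j - ln Q))"
      by (simp add: L_def flip: exp_add) (simp add: algebra_simps)
    also have "\<dots> \<le> exp L * (t * exp (a j - ln P) + (1 - t) * exp (b j - ln Q))"
      using convex_onD[OF exp_convex, of "1 - t" "a j - ln P" "b j - ln Q"] t
      by (intro mult_left_mono) (simp_all add: add.commute)
    also have "\<dots> = exp L * (t * (exp (a j) / P) + (1 - t) * (exp (b j) / Q))"
      using \<open>P > 0\<close> \<open>Q > 0\<close> by (simp add: exp_diff)
    finally show ?thesis .
  qed
  have "(\<Sum>j\<in>J. w j * exp (t * a j + (1 - t) * b j))
      \<le> (\<Sum>j\<in>J. w j * (exp L * (t * (exp (a j) / P) + (1 - t) * (exp (b j) / Q))))"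
    using w termwise by (intro sum_mono mult_left_mono) auto
  also have "\<dots> = (\<Sum>j\<in>J. exp L * t / P * (w j * exp (a j)) + exp L * (1 - t) / Q * (w j * exp (b j)))"
    by (rule sum.cong) (simp_all add: algebra_simps)
  also have "\<dots> = exp L * t / P * P + exp L * (1 - t) / Q * Q"
    by (simp only: sum.distrib P_def Q_def flip: sum_distrib_left)
  also have "\<dots> = exp L"
    using \<open>P > 0\<close> \<open>Q > 0\<close> by (simp add: field_simps)
  finally have le: "(\<Sum>j\<in>J. w j * exp (t * a j + (1 - t) * b j)) \<le> exp L" .
  obtain j where "j \<in> J" "w j \<noteq> 0"
    using Sa by (metis (no_types, lifting) less_irrefl mult_zero_left sum.neutral)
  then have "0 < (\<Sum>j\<in>J. w j * exp (t * a j + (1 - t) * b j))"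
    using w \<open>finite J\<close> by (intro sum_pos2[of J j]) (auto simp: less_le)
  with le have "ln (\<Sum>j\<in>J. w j * exp (t * a j + (1 - t) * b j)) \<le> ln (exp L)"
    by (intro ln_mono)
  then show ?thesis
    by (simp add: L_def P_def Q_def)
qed

lemma S_n_eq_weighted_sum: "S_n n X T f t = (\<Sum>j<n. Rproc T j t / real n * exp (f (X j)))"
  by (simp add: S_n_def sum_distrib_left)

lemma S_n_at_event_ge:
  assumes "i < n"
  shows "exp (f (X i)) / real n \<le> S_n n X T f (T i)"
  unfolding S_n_eq_weighted_sum
  using assms member_le_sum[of i "{..<n}" "\<lambda>j. Rproc T j (T i) / real n * exp (f (X j))"]
  by (simp add: Rproc_def)

lemma S_n_at_event_pos:
  assumes "i < n"
  shows "0 < S_n n X T f (T i)"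
proof -
  have "0 < exp (f (X i)) / real n"
    using assms by simp
  then show ?thesis
    using S_n_at_event_ge[OF assms, where f = f and X = X and T = T] by linarith
qed

lemma ln_S_n_convex:
  assumes "i < n" and "0 \<le> t" "t \<le> 1"
  shows "ln (S_n n X T (\<lambda>x. t * f x + (1 - t) * g x) (T i))
    \<le> t * ln (S_n n X T f (T i)) + (1 - t) * ln (S_n n X T g (T i))"
proof -
  have "\<forall>j\<in>{..<n}. 0 \<le> Rproc T j (T i) / real n"
    by (simp add: Rproc_def)
  moreover have "0 < S_n n X T f (T i)" "0 < S_n n X T g (T i)"
    using S_n_at_event_pos[OF \<open>i < n\<close>] by blast+
  ultimately show ?thesis
    using ln_sum_exp_convex[of "{..<n}" "\<lambda>j. Rproc T j (T i) / real n" "\<lambda>j. f (X j)" "\<lambda>j. g (X j)" t]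
      assms(2,3)
    unfolding S_n_eq_weighted_sum by simp
qed

lemma ell_n_eq_sum:
  "ell_n n X T I f = 1 / real n * (\<Sum>i<n. Nproc T I i 1 * (ln (S_n n X T f (T i)) - f (X i)))"
  unfolding ell_n_def by (simp add: sum_subtractf right_diff_distrib mult.commute)

lemma ell_n_cong: "\<forall>j<n. f (X j) = g (X j) \<Longrightarrow> ell_n n X T I f = ell_n n X T I g"
  unfolding ell_n_def S_n_def by simp

lemma ell_n_add_const: "ell_n n X T I (\<lambda>x. a + f x) = ell_n n X T I f"
proof -
  have shift: "Nproc T I i 1 * (ln (S_n n X T (\<lambda>x. a + f x) (T i)) - (a + f (X i)))
      = Nproc T I i 1 * (ln (S_n n X T f (T i)) - f (X i))" if "i < n" for i
  proof -
    have "S_n n X T (\<lambda>x. a + f x) (T i) = exp a * S_n n X T f (T i)"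
      by (simp add: S_n_def exp_add sum_distrib_left algebra_simps)
    moreover have "0 < S_n n X T f (T i)"
      using S_n_at_event_pos[OF that] .
    ultimately show ?thesis
      by (simp add: ln_mult)
  qed
  show ?thesis
    unfolding ell_n_eq_sum by (rule arg_cong[where f="(*) _"], rule sum.cong[OF refl], rule shift) simp
qed

lemma ell_n_lower_bound:
  assumes "n > 0"
  shows "- ln (real n) \<le> ell_n n X T I f"
proof -
  have "- ln (real n) \<le> Nproc T I i 1 * (ln (S_n n X T f (T i)) - f (X i))" if "i < n" for i
  proof -
    have "ln (exp (f (X i)) / real n) \<le> ln (S_n n X T f (T i))"
      using S_n_at_event_ge[OF that] assms by (intro ln_mono) simp_all
    then have "- ln (real n) \<le> ln (S_n n X T f (T i)) - f (X i)"
      using assms by (simp add: ln_div)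
    moreover have "0 \<le> ln (real n)"
      using assms by simp
    ultimately show ?thesis
      by (auto simp: Nproc_def)
  qed
  then have "real n * - ln (real n) \<le> (\<Sum>i<n. Nproc T I i 1 * (ln (S_n n X T f (T i)) - f (X i)))"
    using sum_mono[of "{..<n}" "\<lambda>_. - ln (real n)"] by simp
  then show ?thesis
    unfolding ell_n_eq_sum using assms by (simp add: field_simps)
qed

lemma ell_n_convex:
  assumes "0 \<le> t" "t \<le> 1"
  shows "ell_n n X T I (\<lambda>x. t * f x + (1 - t) * g x) \<le> t * ell_n n X T I f + (1 - t) * ell_n n X T I g"
proof -
  let ?u = "\<lambda>h i. Nproc T I i 1 * (ln (S_n n X T h (T i)) - h (X i))"
  have "?u (\<lambda>x. t * f x + (1 - t) * g x) i \<le> t * ?u f i + (1 - t) * ?u g i" if "i < n" for i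
    using ln_S_n_convex[OF that assms, of X T f g]
    by (simp add: Nproc_def algebra_simps)
  then have "(\<Sum>i<n. ?u (\<lambda>x. t * f x + (1 - t) * g x) i) \<le> t * (\<Sum>i<n. ?u f i) + (1 - t) * (\<Sum>i<n. ?u g i)"
    using sum_mono[of "{..<n}" "?u (\<lambda>x. t * f x + (1 - t) * g x)" "\<lambda>i. t * ?u f i + (1 - t) * ?u g i"]
    by (simp add: sum.distrib sum_distrib_left)
  then have "1 / real n * (\<Sum>i<n. ?u (\<lambda>x. t * f x + (1 - t) * g x) i)
      \<le> 1 / real n * (t * (\<Sum>i<n. ?u f i) + (1 - t) * (\<Sum>i<n. ?u g i))"
    by (rule mult_left_mono) simp
  also have "\<dots> = t * (1 / real n * (\<Sum>i<n. ?u f i)) + (1 - t) * (1 / real n * (\<Sum>i<n. ?u g i))"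
    by (simp only: distrib_left mult.left_commute)
  finally show ?thesis
    unfolding ell_n_eq_sum .
qed

section \<open>Kernel expansions in the RKHS\<close>

definition kernel_expansion :: "('a \<Rightarrow> 'a \<Rightarrow> real) \<Rightarrow> (nat \<Rightarrow> 'a) \<Rightarrow> nat set \<Rightarrow> real \<Rightarrow> (nat \<Rightarrow> real) \<Rightarrow> 'a \<Rightarrow> real"
  where "kernel_expansion k X B c0 c x = c0 + (\<Sum>i\<in>B. c i * k x (X i))"

definition kernel_indep :: "('a \<Rightarrow> 'a \<Rightarrow> real) \<Rightarrow> (nat \<Rightarrow> 'a) \<Rightarrow> nat set \<Rightarrow> bool"
  where "kernel_indep k X B \<longleftrightarrow>
    (\<forall>c0 c. kernel_expansion k X B c0 c = (\<lambda>_. 0) \<longrightarrow> c0 = 0 \<and> (\<forall>i\<in>B. c i = 0))"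

lemma kernel_expansion_update:
  assumes "finite B" "i \<in> B"
  shows "kernel_expansion k X B c0 (c(i := c i + t)) x = kernel_expansion k X B c0 c x + t * k x (X i)"
proof -
  have "(\<Sum>j\<in>B. (c(i := c i + t)) j * k x (X j))
      = (\<Sum>j\<in>B. c j * k x (X j) + (if j = i then t * k x (X j) else 0))"
    by (rule sum.cong) (auto simp: algebra_simps)
  then show ?thesis
    using assms by (simp add: kernel_expansion_def sum.distrib)
qed

(* The coefficients (c0, c) are encoded as the vector e with e 0 = c0 and e (Suc i) = c i,
   so that the compactness arguments on coords apply. *)
lemma kernel_expansion_coords:
  assumes "finite B"
  obtains e where "e \<in> coords (insert 0 (Suc ` B))"
    "kernel_expansion k X B (e 0) (\<lambda>i. e (Suc i)) = kernel_expansion k X B c0 c"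
    "(\<Sum>j\<in>insert 0 (Suc ` B). (e j)\<^sup>2) = c0\<^sup>2 + (\<Sum>i\<in>B. (c i)\<^sup>2)"
proof
  let ?e = "case_nat c0 (\<lambda>i. if i \<in> B then c i else 0)"
  show "?e \<in> coords (insert 0 (Suc ` B))"
    by (auto simp: coords_def split: nat.split)
  show "kernel_expansion k X B (?e 0) (\<lambda>i. ?e (Suc i)) = kernel_expansion k X B c0 c"
    unfolding kernel_expansion_def by (intro ext arg_cong2[where f="(+)"] sum.cong) auto
  show "(\<Sum>j\<in>insert 0 (Suc ` B). (?e j)\<^sup>2) = c0\<^sup>2 + (\<Sum>i\<in>B. (c i)\<^sup>2)"
    using assms by (simp add: sum.reindex)
qed

lemma quadratic_nonneg_imp_linear_coeff_zero:
  fixes a w :: real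
  assumes nonneg: "\<forall>t. 0 \<le> - 2 * t * a + t\<^sup>2 * w" and "w \<ge> 0"
  shows "a = 0"
proof -
  define s where "s = w + 1"
  have "s > 0"
    using \<open>w \<ge> 0\<close> by (simp add: s_def)
  have "0 \<le> - 2 * (a / s) * a + (a / s)\<^sup>2 * w"
    using nonneg by blast
  then have "0 \<le> s\<^sup>2 * (- 2 * (a / s) * a + (a / s)\<^sup>2 * w)"
    by simp
  also have "\<dots> = a\<^sup>2 * (w - 2 * s)"
    using \<open>s > 0\<close> by (simp add: field_simps power2_eq_square)
  also have "\<dots> = - (a\<^sup>2 * (w + 2))"
    by (simp add: s_def algebra_simps)
  finally have "a\<^sup>2 * (w + 2) \<le> 0"
    by simp
  then show ?thesis
    using \<open>w \<ge> 0\<close> by (simp add: mult_le_0_iff)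
qed

locale rkhs_with_constants =
  fixes k :: "'a \<Rightarrow> 'a \<Rightarrow> real" and H :: "('a \<Rightarrow> real) set"
    and ip :: "('a \<Rightarrow> real) \<Rightarrow> ('a \<Rightarrow> real) \<Rightarrow> real"
  assumes rkhs: "rkhs k H ip" and one_in_H: "(\<lambda>_. 1) \<in> H"
begin

lemma zero_in_H: "(\<lambda>_. 0) \<in> H"
  and lincomb_in_H: "f \<in> H \<Longrightarrow> g \<in> H \<Longrightarrow> (\<lambda>x. a * f x + b * g x) \<in> H"
  and ip_sym: "f \<in> H \<Longrightarrow> g \<in> H \<Longrightarrow> ip f g = ip g f"
  and ip_lincomb_left: "f \<in> H \<Longrightarrow> g \<in> H \<Longrightarrow> h \<in> H \<Longrightarrow>
    ip (\<lambda>x. a * f x + b * g x) h = a * ip f h + b * ip g h"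
  and ip_self_nonneg: "f \<in> H \<Longrightarrow> 0 \<le> ip f f"
  and ip_self_eq_0: "f \<in> H \<Longrightarrow> ip f f = 0 \<Longrightarrow> f = (\<lambda>_. 0)"
  and kernel_section_in_H: "(\<lambda>x. k x y) \<in> H"
  and reproducing: "f \<in> H \<Longrightarrow> ip f (\<lambda>x. k x y) = f y"
  using rkhs unfolding rkhs_def by blast+

lemma ip_lincomb_right:
  "f \<in> H \<Longrightarrow> g \<in> H \<Longrightarrow> h \<in> H \<Longrightarrow> ip h (\<lambda>x. a * f x + b * g x) = a * ip h f + b * ip h g"
  by (simp add: ip_sym[of h] lincomb_in_H ip_lincomb_left)

lemma ip_zero_right: "h \<in> H \<Longrightarrow> ip h (\<lambda>_. 0) = 0"
  using ip_lincomb_right[OF zero_in_H zero_in_H, of h 0 0] by simp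

lemma ip_lincomb_self:
  assumes "f \<in> H" "g \<in> H"
  shows "ip (\<lambda>x. a * f x + b * g x) (\<lambda>x. a * f x + b * g x)
    = a\<^sup>2 * ip f f + 2 * a * b * ip f g + b\<^sup>2 * ip g g"
  using assms ip_sym[OF assms]
  by (simp add: ip_lincomb_left ip_lincomb_right lincomb_in_H algebra_simps power2_eq_square)

lemma ip_scale_self: "f \<in> H \<Longrightarrow> ip (\<lambda>x. s * f x) (\<lambda>x. s * f x) = s\<^sup>2 * ip f f"
  using ip_lincomb_self[of f f s 0] by simp

lemma ip_diff_self_lower_bound:
  assumes "f \<in> H" "h \<in> H"
  shows "ip h h / 2 - ip f f \<le> ip (\<lambda>x. f x - h x) (\<lambda>x. f x - h x)"
proof -
  have "0 \<le> ip (\<lambda>x. 2 * f x + (-1) * h x) (\<lambda>x. 2 * f x + (-1) * h x)"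
    using ip_self_nonneg lincomb_in_H[OF assms] by blast
  then have "0 \<le> 4 * ip f f - 4 * ip f h + ip h h"
    unfolding ip_lincomb_self[OF assms] by (simp add: power2_eq_square)
  moreover have "ip (\<lambda>x. f x - h x) (\<lambda>x. f x - h x) = ip f f - 2 * ip f h + ip h h"
    using ip_lincomb_self[OF assms, of 1 "-1"] by simp
  ultimately show ?thesis
    by linarith
qed

lemma ip_convex_comb_self:
  assumes "f \<in> H" "g \<in> H"
  shows "ip (\<lambda>x. t * f x + (1 - t) * g x) (\<lambda>x. t * f x + (1 - t) * g x)
    = t * ip f f + (1 - t) * ip g g - t * (1 - t) * ip (\<lambda>x. f x - g x) (\<lambda>x. f x - g x)"
proof -
  have diff: "ip (\<lambda>x. f x - g x) (\<lambda>x. f x - g x) = ip f f - 2 * ip f g + ip g g"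
    using ip_lincomb_self[OF assms, of 1 "-1"] by simp
  show ?thesis
    unfolding ip_lincomb_self[OF assms] diff by (simp add: algebra_simps power2_eq_square)
qed

lemma sum_in_H: "finite B \<Longrightarrow> \<forall>j\<in>B. u j \<in> H \<Longrightarrow> (\<lambda>x. \<Sum>j\<in>B. c j * u j x) \<in> H"
proof (induction B rule: finite_induct)
  case empty
  then show ?case using zero_in_H by simp
next
  case (insert a B)
  then have "(\<lambda>x. c a * u a x + 1 * (\<Sum>j\<in>B. c j * u j x)) \<in> H"
    by (intro lincomb_in_H) auto
  then show ?case using insert by simp
qed

lemma ip_sum_right:
  "finite B \<Longrightarrow> \<forall>j\<in>B. u j \<in> H \<Longrightarrow> h \<in> H \<Longrightarrow>
    ip h (\<lambda>x. \<Sum>j\<in>B. c j * u j x) = (\<Sum>j\<in>B. c j * ip h (u j))"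
proof (induction B rule: finite_induct)
  case empty
  then show ?case using ip_zero_right by simp
next
  case (insert a B)
  then have "ip h (\<lambda>x. c a * u a x + 1 * (\<Sum>j\<in>B. c j * u j x))
      = c a * ip h (u a) + 1 * ip h (\<lambda>x. \<Sum>j\<in>B. c j * u j x)"
    by (intro ip_lincomb_right sum_in_H) auto
  then show ?case using insert by simp
qed

lemma kernel_expansion_in_H: "finite B \<Longrightarrow> kernel_expansion k X B c0 c \<in> H"
  using lincomb_in_H[OF one_in_H sum_in_H[of B "\<lambda>i x. k x (X i)" c], of c0 1]
  by (simp add: kernel_expansion_def[abs_def] kernel_section_in_H)

lemma ip_kernel_expansion:
  assumes "finite B" "f \<in> H"
  shows "ip f (kernel_expansion k X B c0 c) = c0 * ip f (\<lambda>_. 1) + (\<Sum>i\<in>B. c i * f (X i))"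
proof -
  have "kernel_expansion k X B c0 c = (\<lambda>x. c0 * 1 + 1 * (\<Sum>i\<in>B. c i * k x (X i)))"
    by (simp add: kernel_expansion_def[abs_def])
  then show ?thesis
    using assms ip_lincomb_right[OF one_in_H sum_in_H[of B "\<lambda>i x. k x (X i)" c] assms(2), of c0 1]
      ip_sum_right[of B "\<lambda>i x. k x (X i)" f c]
    by (simp add: kernel_section_in_H reproducing)
qed

lemma ip_kernel_expansion_self:
  assumes "finite B"
  shows "ip (kernel_expansion k X B c0 c) (kernel_expansion k X B c0 c)
    = c0 * (c0 * ip (\<lambda>_. 1) (\<lambda>_. 1) + (\<Sum>i\<in>B. c i))
      + (\<Sum>i\<in>B. c i * (c0 + (\<Sum>m\<in>B. c m * k (X i) (X m))))"
proof -
  have h: "kernel_expansion k X B c0 c \<in> H"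
    using assms by (rule kernel_expansion_in_H)
  have "ip (kernel_expansion k X B c0 c) (\<lambda>_. 1) = c0 * ip (\<lambda>_. 1) (\<lambda>_. 1) + (\<Sum>i\<in>B. c i)"
    using ip_sym[OF h one_in_H] ip_kernel_expansion[OF assms one_in_H] by simp
  then show ?thesis
    using ip_kernel_expansion[OF assms h] by (simp add: kernel_expansion_def)
qed

lemma continuous_on_ip_kernel_expansion_self:
  assumes "finite B" "continuous_on S c0" "\<And>i. continuous_on S (\<lambda>s. c s i)"
  shows "continuous_on S (\<lambda>s. ip (kernel_expansion k X B (c0 s) (c s)) (kernel_expansion k X B (c0 s) (c s)))"
  unfolding ip_kernel_expansion_self[OF assms(1)] by (intro continuous_intros assms)

lemma continuous_on_ip_kernel_expansion:
  assumes "finite B" "f \<in> H" "continuous_on S c0" "\<And>i. continuous_on S (\<lambda>s. c s i)"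
  shows "continuous_on S (\<lambda>s. ip f (kernel_expansion k X B (c0 s) (c s)))"
  unfolding ip_kernel_expansion[OF assms(1,2)] by (intro continuous_intros assms)

lemma orthogonal_if_minimal:
  assumes "r \<in> H" "u \<in> H" and min: "\<forall>t. ip r r \<le> ip (\<lambda>x. r x - t * u x) (\<lambda>x. r x - t * u x)"
  shows "ip r u = 0"
proof (rule quadratic_nonneg_imp_linear_coeff_zero)
  show "\<forall>t. 0 \<le> - 2 * t * ip r u + t\<^sup>2 * ip u u"
  proof
    fix t
    have "ip (\<lambda>x. r x - t * u x) (\<lambda>x. r x - t * u x) = ip r r - 2 * t * ip r u + t\<^sup>2 * ip u u"
      using ip_lincomb_self[OF assms(1,2), of 1 "-t"] by simp
    then show "0 \<le> - 2 * t * ip r u + t\<^sup>2 * ip u u"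
      using min[rule_format, of t] by linarith
  qed
  show "0 \<le> ip u u"
    using \<open>u \<in> H\<close> by (rule ip_self_nonneg)
qed

lemma kernel_expansion_eq_0_iff:
  assumes "finite B" "B \<subseteq> {..<n}"
  shows "kernel_expansion k X B d0 d = (\<lambda>_. 0)
    \<longleftrightarrow> ip (\<lambda>_. 1) (kernel_expansion k X B d0 d) = 0 \<and> (\<forall>l<n. kernel_expansion k X B d0 d (X l) = 0)"
proof
  assume "ip (\<lambda>_. 1) (kernel_expansion k X B d0 d) = 0 \<and> (\<forall>l<n. kernel_expansion k X B d0 d (X l) = 0)"
  moreover have h: "kernel_expansion k X B d0 d \<in> H"
    using assms(1) by (rule kernel_expansion_in_H)
  moreover have "\<forall>i\<in>B. kernel_expansion k X B d0 d (X i) = 0"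
    using assms(2) calculation by auto
  ultimately have "ip (kernel_expansion k X B d0 d) (kernel_expansion k X B d0 d) = 0"
    using ip_kernel_expansion[OF assms(1) h] ip_sym[OF h one_in_H] by simp
  then show "kernel_expansion k X B d0 d = (\<lambda>_. 0)"
    using ip_self_eq_0[OF h] by blast
qed (simp add: ip_zero_right one_in_H)

(* v0 and wvec k X i are the images of 1 and k(., X i) under the linear map
   h |-> (ip 1 h, h (X 0), ..., h (X (n - 1))), which is injective on their span. *)
lemma indep_family_iff_kernel_indep:
  assumes k_sym: "\<forall>x y. k x y = k y x" and "B \<subseteq> {..<n}"
  shows "indep_family ip k n X B \<longleftrightarrow> kernel_indep k X B"
proof -
  have "finite B"
    using assms(2) finite_subset by blast
  have row_0: "d0 * v0 ip 0 + (\<Sum>i\<in>B. d i * wvec k X i 0) = ip (\<lambda>_. 1) (kernel_expansion k X B d0 d)"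
    for d0 d
    using ip_kernel_expansion[OF \<open>finite B\<close> one_in_H] by (simp add: v0_def wvec_def hnorm2_def)
  have row_Suc: "d0 * v0 ip (Suc l) + (\<Sum>i\<in>B. d i * wvec k X i (Suc l)) = kernel_expansion k X B d0 d (X l)"
    for d0 d l
    using k_sym by (simp add: v0_def wvec_def kernel_expansion_def)
  have rows: "(\<forall>j\<le>n. P j) \<longleftrightarrow> P 0 \<and> (\<forall>l<n. P (Suc l))" for P
  proof (intro iffI conjI allI impI)
    fix j assume "P 0 \<and> (\<forall>l<n. P (Suc l))" "j \<le> n"
    then show "P j"
      by (cases j) auto
  qed auto
  have "(\<forall>j\<le>n. d0 * v0 ip j + (\<Sum>i\<in>B. d i * wvec k X i j) = 0)
      \<longleftrightarrow> kernel_expansion k X B d0 d = (\<lambda>_. 0)" for d0 d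
    unfolding kernel_expansion_eq_0_iff[OF \<open>finite B\<close> assms(2)] rows row_0 row_Suc ..
  then show ?thesis
    unfolding indep_family_def kernel_indep_def by simp
qed

lemma ip_kernel_expansion_self_pos:
  assumes "finite B" "kernel_indep k X B" "c0 \<noteq> 0 \<or> (\<exists>i\<in>B. c i \<noteq> 0)"
  shows "0 < ip (kernel_expansion k X B c0 c) (kernel_expansion k X B c0 c)"
proof -
  have "kernel_expansion k X B c0 c \<noteq> (\<lambda>_. 0)"
    using assms(2,3) unfolding kernel_indep_def by blast
  then have "ip (kernel_expansion k X B c0 c) (kernel_expansion k X B c0 c) \<noteq> 0"
    using ip_self_eq_0 kernel_expansion_in_H[OF assms(1)] by blast
  moreover have "0 \<le> ip (kernel_expansion k X B c0 c) (kernel_expansion k X B c0 c)"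
    using ip_self_nonneg kernel_expansion_in_H[OF assms(1)] by blast
  ultimately show ?thesis
    by simp
qed

lemma kernel_expansion_coercive:
  assumes "finite B" "kernel_indep k X B"
  shows "\<exists>l>0. \<forall>c0 c. l * (c0\<^sup>2 + (\<Sum>i\<in>B. (c i)\<^sup>2))
    \<le> ip (kernel_expansion k X B c0 c) (kernel_expansion k X B c0 c)"
proof -
  let ?B = "insert 0 (Suc ` B)"
  let ?h = "\<lambda>e. kernel_expansion k X B (e 0) (\<lambda>i. e (Suc i))"
  have "\<exists>l>0. \<forall>e\<in>coords ?B. l * (\<Sum>j\<in>?B. (e j)\<^sup>2) \<le> ip (?h e) (?h e)"
  proof (rule coords_quadratic_form_lower_bound)
    show "finite ?B"
      using assms(1) by simp
    show "continuous_on (coords ?B) (\<lambda>e. ip (?h e) (?h e))"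
      using assms(1) by (intro continuous_on_ip_kernel_expansion_self continuous_intros)
    have "?h (\<lambda>i. s * e i) = (\<lambda>x. s * ?h e x)" for s e
      by (simp add: kernel_expansion_def[abs_def] sum_distrib_left algebra_simps)
    then show "\<forall>e\<in>coords ?B. \<forall>s. ip (?h (\<lambda>i. s * e i)) (?h (\<lambda>i. s * e i)) = s\<^sup>2 * ip (?h e) (?h e)"
      using ip_scale_self[OF kernel_expansion_in_H[OF assms(1)]] by simp
    show "\<forall>e\<in>coords ?B. (\<exists>j\<in>?B. e j \<noteq> 0) \<longrightarrow> 0 < ip (?h e) (?h e)"
    proof (intro ballI impI ip_kernel_expansion_self_pos[OF assms])
      fix e :: "nat \<Rightarrow> real"
      assume "\<exists>j\<in>?B. e j \<noteq> 0"
      then show "e 0 \<noteq> 0 \<or> (\<exists>i\<in>B. e (Suc i) \<noteq> 0)"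
        by auto
    qed
  qed
  then obtain l where "l > 0" and l: "\<forall>e\<in>coords ?B. l * (\<Sum>j\<in>?B. (e j)\<^sup>2) \<le> ip (?h e) (?h e)"
    by blast
  have "l * (c0\<^sup>2 + (\<Sum>i\<in>B. (c i)\<^sup>2)) \<le> ip (kernel_expansion k X B c0 c) (kernel_expansion k X B c0 c)"
    for c0 c
  proof -
    obtain e where "e \<in> coords ?B" and h_eq: "?h e = kernel_expansion k X B c0 c"
      and sum_eq: "(\<Sum>j\<in>?B. (e j)\<^sup>2) = c0\<^sup>2 + (\<Sum>i\<in>B. (c i)\<^sup>2)"
      using kernel_expansion_coords[OF assms(1)] .
    show ?thesis
      using l[rule_format, OF \<open>e \<in> coords ?B\<close>] unfolding h_eq sum_eq .
  qed
  then show ?thesis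
    using \<open>l > 0\<close> by blast
qed

lemma kernel_expansion_best_approximation:
  assumes "finite B" "kernel_indep k X B" "f \<in> H"
  shows "\<exists>c0 c. \<forall>d0 d. ip (\<lambda>x. f x - kernel_expansion k X B c0 c x) (\<lambda>x. f x - kernel_expansion k X B c0 c x)
    \<le> ip (\<lambda>x. f x - kernel_expansion k X B d0 d x) (\<lambda>x. f x - kernel_expansion k X B d0 d x)"
proof -
  let ?B = "insert 0 (Suc ` B)"
  let ?h = "\<lambda>e. kernel_expansion k X B (e 0) (\<lambda>i. e (Suc i))"
  let ?d = "\<lambda>h. ip (\<lambda>x. f x - h x) (\<lambda>x. f x - h x)"
  have h_in_H: "?h e \<in> H" for e
    using assms(1) by (rule kernel_expansion_in_H)
  have d_eq: "?d (?h e) = ip f f - 2 * ip f (?h e) + ip (?h e) (?h e)" for e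
    using ip_lincomb_self[OF assms(3) h_in_H, of 1 "-1"] by simp
  obtain l where "l > 0"
    and coercive: "\<And>c0 c. l * (c0\<^sup>2 + (\<Sum>i\<in>B. (c i)\<^sup>2))
      \<le> ip (kernel_expansion k X B c0 c) (kernel_expansion k X B c0 c)"
    using kernel_expansion_coercive[OF assms(1,2)] by blast
  have "\<exists>e\<in>coords ?B. \<forall>e'\<in>coords ?B. ?d (?h e) \<le> ?d (?h e')"
  proof (rule coords_coercive_attains_min)
    show "finite ?B"
      using assms(1) by simp
    show "continuous_on (coords ?B) (\<lambda>e. ?d (?h e))"
      unfolding d_eq using assms(1,3)
      by (intro continuous_intros continuous_on_ip_kernel_expansion continuous_on_ip_kernel_expansion_self)
    show "l / 2 > 0"
      using \<open>l > 0\<close> by simp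
    show "\<forall>e\<in>coords ?B. - ip f f + l / 2 * (\<Sum>j\<in>?B. (e j)\<^sup>2) \<le> ?d (?h e)"
    proof
      fix e :: "nat \<Rightarrow> real"
      have "l * (\<Sum>j\<in>?B. (e j)\<^sup>2) \<le> ip (?h e) (?h e)"
        using coercive[of "e 0" "\<lambda>i. e (Suc i)"] assms(1) by (simp add: sum.reindex)
      then show "- ip f f + l / 2 * (\<Sum>j\<in>?B. (e j)\<^sup>2) \<le> ?d (?h e)"
        using ip_diff_self_lower_bound[OF assms(3) h_in_H[of e]] by linarith
    qed
  qed
  then obtain e where min: "\<forall>e'\<in>coords ?B. ?d (?h e) \<le> ?d (?h e')"
    by blast
  have "?d (?h e) \<le> ?d (kernel_expansion k X B d0 d)" for d0 d
  proof -
    obtain e' where "e' \<in> coords ?B" and "?h e' = kernel_expansion k X B d0 d"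
      using kernel_expansion_coords[OF assms(1)] by blast
    then show ?thesis
      using min by force
  qed
  then show ?thesis
    by blast
qed

lemma kernel_expansion_projection:
  assumes "finite B" "kernel_indep k X B" "f \<in> H"
  shows "\<exists>c0 c. ip (\<lambda>x. f x - kernel_expansion k X B c0 c x) (\<lambda>_. 1) = 0
    \<and> (\<forall>i\<in>B. f (X i) = kernel_expansion k X B c0 c (X i))"
proof -
  obtain c0 c where min: "\<And>d0 d. ip (\<lambda>x. f x - kernel_expansion k X B c0 c x) (\<lambda>x. f x - kernel_expansion k X B c0 c x)
    \<le> ip (\<lambda>x. f x - kernel_expansion k X B d0 d x) (\<lambda>x. f x - kernel_expansion k X B d0 d x)"
    using kernel_expansion_best_approximation[OF assms] by blast
  define r where "r = (\<lambda>x. f x - kernel_expansion k X B c0 c x)"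
  have "r \<in> H"
    using lincomb_in_H[OF assms(3) kernel_expansion_in_H[OF assms(1)], of 1 "-1"] by (simp add: r_def)
  have "ip r (\<lambda>_. 1) = 0"
  proof (rule orthogonal_if_minimal[OF \<open>r \<in> H\<close> one_in_H], intro allI)
    fix t
    have "(\<lambda>x. f x - kernel_expansion k X B (c0 + t) c x) = (\<lambda>x. r x - t * 1)"
      by (simp add: r_def kernel_expansion_def fun_eq_iff)
    then show "ip r r \<le> ip (\<lambda>x. r x - t * 1) (\<lambda>x. r x - t * 1)"
      using min[of "c0 + t" c, folded r_def] by (simp only:)
  qed
  moreover have "r (X i) = 0" if "i \<in> B" for i
  proof -
    have "ip r (\<lambda>x. k x (X i)) = 0"
    proof (rule orthogonal_if_minimal[OF \<open>r \<in> H\<close> kernel_section_in_H], intro allI)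
      fix t
      have "(\<lambda>x. f x - kernel_expansion k X B c0 (c(i := c i + t)) x) = (\<lambda>x. r x - t * k x (X i))"
        by (simp add: r_def kernel_expansion_update[OF assms(1) that] fun_eq_iff)
      then show "ip r r \<le> ip (\<lambda>x. r x - t * k x (X i)) (\<lambda>x. r x - t * k x (X i))"
        using min[of c0 "c(i := c i + t)", folded r_def] by (simp only:)
    qed
    then show ?thesis
      using reproducing[OF \<open>r \<in> H\<close>] by simp
  qed
  ultimately show ?thesis
    unfolding r_def by auto
qed

end

section \<open>The penalised objective on the span of the data\<close>

definition f_beta_offset :: "('a \<Rightarrow> 'a \<Rightarrow> real) \<Rightarrow> nat \<Rightarrow> (nat \<Rightarrow> 'a) \<Rightarrow> nat set \<Rightarrow> (nat \<Rightarrow> real) \<Rightarrow> real"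
  where "f_beta_offset k n X A \<beta> = - (\<Sum>i\<in>A. \<beta> i * kbar k n X (X i))"

lemma f_beta_eq_kernel_expansion:
  "f_beta k n X A \<beta> = kernel_expansion k X A (f_beta_offset k n X A \<beta>) \<beta>"
  by (simp add: fun_eq_iff f_beta_def ktilde_def kernel_expansion_def f_beta_offset_def
      algebra_simps sum_subtractf)

lemma f_beta_lincomb:
  "f_beta k n X A (\<lambda>i. a * \<beta> i + b * \<beta>' i) = (\<lambda>x. a * f_beta k n X A \<beta> x + b * f_beta k n X A \<beta>' x)"
  by (simp add: fun_eq_iff f_beta_def sum.distrib sum_distrib_left algebra_simps)

lemma P_n_f_beta:
  assumes "n > 0"
  shows "P_n n X (f_beta k n X A \<beta>) = 0"
proof -
  have "(\<Sum>j<n. k (X j) (X i) - kbar k n X (X i)) = 0" for i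
    using assms by (simp add: kbar_def sum_subtractf)
  then have "(\<Sum>i\<in>A. \<Sum>j<n. (k (X j) (X i) - kbar k n X (X i)) * \<beta> i) = 0"
    by (simp flip: sum_distrib_right)
  then show ?thesis
    unfolding P_n_def f_beta_def ktilde_def by (subst sum.swap) simp
qed

lemma ell_pen_f_beta:
  "n > 0 \<Longrightarrow> ell_pen ip \<gamma> n X T I (f_beta k n X A \<beta>)
    = ell_n n X T I (f_beta k n X A \<beta>) + \<gamma> * ip (f_beta k n X A \<beta>) (f_beta k n X A \<beta>)"
  by (simp add: ell_pen_def hnorm2_def P_n_f_beta)

locale cox_setting = rkhs_with_constants k H ip
  for k :: "'a \<Rightarrow> 'a \<Rightarrow> real" and H ip +
  fixes n :: nat and X :: "nat \<Rightarrow> 'a" and T :: "nat \<Rightarrow> real" and I :: "nat \<Rightarrow> nat"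
    and A :: "nat set" and \<gamma> :: real
  assumes k_sym: "\<forall>x y. k x y = k y x" and n_pos: "n > 0" and \<gamma>_pos: "\<gamma> > 0"
    and A_sub: "A \<subseteq> {..<n}" and A_indep: "indep_family ip k n X A"
    and A_max: "\<forall>B. A \<subset> B \<and> B \<subseteq> {..<n} \<longrightarrow> \<not> indep_family ip k n X B"
begin

abbreviation ell_pen_beta :: "(nat \<Rightarrow> real) \<Rightarrow> real"
  where "ell_pen_beta \<beta> \<equiv> ell_pen ip \<gamma> n X T I (f_beta k n X A \<beta>)"

lemma finite_A: "finite A"
  using A_sub finite_subset by blast

lemma kernel_indep_A: "kernel_indep k X A"
  using A_indep indep_family_iff_kernel_indep[OF k_sym A_sub] by blast

lemma f_beta_in_H: "f_beta k n X A \<beta> \<in> H"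
  unfolding f_beta_eq_kernel_expansion using finite_A by (rule kernel_expansion_in_H)

lemma f_beta_coercive: "\<exists>l>0. \<forall>\<beta>. l * (\<Sum>i\<in>A. (\<beta> i)\<^sup>2) \<le> ip (f_beta k n X A \<beta>) (f_beta k n X A \<beta>)"
proof -
  obtain l where "l > 0" and l: "\<forall>c0 c. l * (c0\<^sup>2 + (\<Sum>i\<in>A. (c i)\<^sup>2))
      \<le> ip (kernel_expansion k X A c0 c) (kernel_expansion k X A c0 c)"
    using kernel_expansion_coercive[OF finite_A kernel_indep_A] by blast
  have "l * (\<Sum>i\<in>A. (\<beta> i)\<^sup>2) \<le> l * ((f_beta_offset k n X A \<beta>)\<^sup>2 + (\<Sum>i\<in>A. (\<beta> i)\<^sup>2))" for \<beta>
    using \<open>l > 0\<close> by simp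
  then show ?thesis
    using \<open>l > 0\<close> l unfolding f_beta_eq_kernel_expansion by (meson order_trans)
qed

(* Strong convexity comes from the penalty alone: ell_n is merely convex, and the parallelogram
   identity for f_beta gives the modulus 2 gamma l. *)
lemma ell_pen_beta_strongly_convex: "strongly_convex_coords A ell_pen_beta"
proof -
  obtain l where "l > 0" and l: "\<forall>\<beta>. l * (\<Sum>i\<in>A. (\<beta> i)\<^sup>2) \<le> ip (f_beta k n X A \<beta>) (f_beta k n X A \<beta>)"
    using f_beta_coercive by blast
  show ?thesis
    unfolding strongly_convex_coords_def
  proof (intro exI[of _ "2 * \<gamma> * l"] conjI ballI allI impI)
    show "2 * \<gamma> * l > 0"
      using \<open>l > 0\<close> \<gamma>_pos by simp
    fix \<beta> \<beta>' :: "nat \<Rightarrow> real" and t :: real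
    assume t: "0 \<le> t \<and> t \<le> 1"
    define F where "F = f_beta k n X A \<beta>"
    define G where "G = f_beta k n X A \<beta>'"
    define C where "C = (\<lambda>x. t * F x + (1 - t) * G x)"
    define D where "D = (\<lambda>x. F x - G x)"
    let ?S = "\<Sum>i\<in>A. (\<beta> i - \<beta>' i)\<^sup>2"
    have comb: "f_beta k n X A (\<lambda>i. t * \<beta> i + (1 - t) * \<beta>' i) = C"
      unfolding C_def F_def G_def by (rule f_beta_lincomb)
    have "D = f_beta k n X A (\<lambda>i. 1 * \<beta> i + (-1) * \<beta>' i)"
      unfolding D_def F_def G_def f_beta_lincomb by simp
    then have "l * ?S \<le> ip D D"
      using l by simp
    then have "\<gamma> * t * (1 - t) * (l * ?S) \<le> \<gamma> * t * (1 - t) * ip D D"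
      using t \<gamma>_pos by (intro mult_left_mono) simp_all
    moreover have "ell_n n X T I C \<le> t * ell_n n X T I F + (1 - t) * ell_n n X T I G"
      unfolding C_def using t by (intro ell_n_convex) auto
    moreover have conv: "ip C C = t * ip F F + (1 - t) * ip G G - t * (1 - t) * ip D D"
      unfolding C_def D_def F_def G_def by (intro ip_convex_comb_self f_beta_in_H)
    have "\<gamma> * ip C C = t * (\<gamma> * ip F F) + (1 - t) * (\<gamma> * ip G G) - \<gamma> * t * (1 - t) * ip D D"
      unfolding conv by (simp add: algebra_simps)
    moreover have "t * (ell_n n X T I F + \<gamma> * ip F F) + (1 - t) * (ell_n n X T I G + \<gamma> * ip G G)
        - 2 * \<gamma> * l / 2 * t * (1 - t) * ?S
      = t * ell_n n X T I F + (1 - t) * ell_n n X T I G + t * (\<gamma> * ip F F) + (1 - t) * (\<gamma> * ip G G)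
        - \<gamma> * t * (1 - t) * (l * ?S)"
      by (simp add: algebra_simps)
    ultimately show "ell_pen_beta (\<lambda>i. t * \<beta> i + (1 - t) * \<beta>' i)
        \<le> t * ell_pen_beta \<beta> + (1 - t) * ell_pen_beta \<beta>' - 2 * \<gamma> * l / 2 * t * (1 - t) * ?S"
      unfolding ell_pen_f_beta[OF n_pos] unfolding comb F_def[symmetric] G_def[symmetric] by linarith
  qed
qed

lemma ell_pen_beta_continuous: "continuous_on S ell_pen_beta"
proof -
  have "continuous_on S (\<lambda>\<beta>. ln (S_n n X T (f_beta k n X A \<beta>) (T i)))" if "i < n" for i
  proof (rule continuous_on_ln)
    show "continuous_on S (\<lambda>\<beta>. S_n n X T (f_beta k n X A \<beta>) (T i))"
      unfolding S_n_def f_beta_def by (intro continuous_intros)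
    show "\<forall>\<beta>\<in>S. S_n n X T (f_beta k n X A \<beta>) (T i) \<noteq> 0"
      using S_n_at_event_pos[OF that] by (metis less_irrefl)
  qed
  moreover have "continuous_on S (\<lambda>\<beta>. f_beta k n X A \<beta> x)" for x
    unfolding f_beta_def by (intro continuous_intros)
  ultimately have "continuous_on S (\<lambda>\<beta>. ell_n n X T I (f_beta k n X A \<beta>))"
    unfolding ell_n_eq_sum by (intro continuous_on_mult_left continuous_on_sum continuous_on_diff) auto
  moreover have "continuous_on S (\<lambda>\<beta>. ip (f_beta k n X A \<beta>) (f_beta k n X A \<beta>))"
    unfolding f_beta_eq_kernel_expansion f_beta_offset_def
    using finite_A by (intro continuous_on_ip_kernel_expansion_self continuous_intros)
  ultimately show ?thesis
    unfolding ell_pen_f_beta[OF n_pos] by (intro continuous_intros)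
qed

lemma ell_pen_beta_has_min: "\<exists>\<beta>\<in>coords A. \<forall>\<beta>'\<in>coords A. ell_pen_beta \<beta> \<le> ell_pen_beta \<beta>'"
proof -
  obtain l where "l > 0" and l: "\<forall>\<beta>. l * (\<Sum>i\<in>A. (\<beta> i)\<^sup>2) \<le> ip (f_beta k n X A \<beta>) (f_beta k n X A \<beta>)"
    using f_beta_coercive by blast
  show ?thesis
  proof (rule coords_coercive_attains_min[OF finite_A ell_pen_beta_continuous])
    show "\<gamma> * l > 0"
      using \<open>l > 0\<close> \<gamma>_pos by simp
    show "\<forall>\<beta>\<in>coords A. - ln (real n) + \<gamma> * l * (\<Sum>i\<in>A. (\<beta> i)\<^sup>2) \<le> ell_pen_beta \<beta>"
    proof
      fix \<beta> :: "nat \<Rightarrow> real"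
      have "- ln (real n) \<le> ell_n n X T I (f_beta k n X A \<beta>)"
        by (rule ell_n_lower_bound[OF n_pos])
      moreover have "\<gamma> * (l * (\<Sum>i\<in>A. (\<beta> i)\<^sup>2)) \<le> \<gamma> * ip (f_beta k n X A \<beta>) (f_beta k n X A \<beta>)"
        using l \<gamma>_pos by (simp add: mult_left_mono)
      ultimately show "- ln (real n) + \<gamma> * l * (\<Sum>i\<in>A. (\<beta> i)\<^sup>2) \<le> ell_pen_beta \<beta>"
        unfolding ell_pen_f_beta[OF n_pos] by (simp add: mult.assoc)
    qed
  qed
qed

lemma ell_pen_beta_min_unique:
  "\<beta>1 \<in> coords A \<Longrightarrow> \<forall>\<beta>\<in>coords A. ell_pen_beta \<beta>1 \<le> ell_pen_beta \<beta> \<Longrightarrow>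
   \<beta>2 \<in> coords A \<Longrightarrow> \<forall>\<beta>\<in>coords A. ell_pen_beta \<beta>2 \<le> ell_pen_beta \<beta> \<Longrightarrow> \<beta>1 = \<beta>2"
  using strongly_convex_coords_unique_min[OF finite_A ell_pen_beta_strongly_convex] by blast

(* By maximality of A, some nontrivial combination of 1 and the k(., X i), i in insert j A,
   vanishes, and its coefficient at j is nonzero. *)
lemma residual_vanishes_on_sample:
  assumes "r \<in> H" "ip r (\<lambda>_. 1) = 0" "\<forall>i\<in>A. r (X i) = 0" "j < n"
  shows "r (X j) = 0"
proof (cases "j \<in> A")
  case False
  have "A \<subset> insert j A" "insert j A \<subseteq> {..<n}"
    using False A_sub \<open>j < n\<close> by auto
  then have "\<not> kernel_indep k X (insert j A)"
    using A_max indep_family_iff_kernel_indep[OF k_sym] by blast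
  then obtain d0 d where vanish: "kernel_expansion k X (insert j A) d0 d = (\<lambda>_. 0)"
    and nontrivial: "\<not> (d0 = 0 \<and> (\<forall>i\<in>insert j A. d i = 0))"
    unfolding kernel_indep_def by blast
  have "d j \<noteq> 0"
  proof
    assume "d j = 0"
    then have "kernel_expansion k X A d0 d = (\<lambda>_. 0)"
      using vanish False finite_A by (simp add: kernel_expansion_def fun_eq_iff)
    then show False
      using kernel_indep_A nontrivial \<open>d j = 0\<close> unfolding kernel_indep_def by blast
  qed
  have "0 = ip r (kernel_expansion k X (insert j A) d0 d)"
    using vanish ip_zero_right[OF \<open>r \<in> H\<close>] by simp
  also have "\<dots> = d j * r (X j)"
    using ip_kernel_expansion[OF _ \<open>r \<in> H\<close>] assms(2,3) False finite_A by simp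
  finally show ?thesis
    using \<open>d j \<noteq> 0\<close> by simp
qed (use assms in auto)

lemma ell_pen_orthogonal_split:
  assumes "r \<in> H" "\<forall>j<n. r (X j) = 0" "ip (f_beta k n X A \<beta>) r = 0"
  shows "ell_pen ip \<gamma> n X T I (\<lambda>x. a + f_beta k n X A \<beta> x + r x) = ell_pen_beta \<beta> + \<gamma> * ip r r + \<gamma> * a\<^sup>2"
proof -
  define F where "F = f_beta k n X A \<beta>"
  define f where "f = (\<lambda>x. a + F x + r x)"
  have f_sample: "\<forall>j<n. f (X j) = a + F (X j)"
    using assms(2) by (simp add: f_def)
  have "ell_n n X T I f = ell_n n X T I F"
    using ell_n_cong[where f = f and g = "\<lambda>x. a + F x", OF f_sample] ell_n_add_const by simp
  moreover have "P_n n X f = a"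
  proof -
    have "P_n n X f = a + P_n n X F"
      using f_sample n_pos by (simp add: P_n_def sum.distrib field_simps)
    then show ?thesis
      using P_n_f_beta[OF n_pos] by (simp add: F_def)
  qed
  moreover have "hnorm2 ip (\<lambda>x. f x - a * 1) = ip F F + ip r r"
    using ip_lincomb_self[OF f_beta_in_H[of \<beta>] assms(1), where a = 1 and b = 1] assms(3)
    by (simp add: hnorm2_def f_def F_def)
  ultimately show ?thesis
    unfolding ell_pen_f_beta[OF n_pos] by (simp add: ell_pen_def f_def F_def algebra_simps)
qed

lemma ell_pen_decomposition:
  assumes "f \<in> H"
  obtains \<beta> a r where "\<beta> \<in> coords A" "r \<in> H" "f = (\<lambda>x. a + f_beta k n X A \<beta> x + r x)"
    "ell_pen ip \<gamma> n X T I f = ell_pen_beta \<beta> + \<gamma> * ip r r + \<gamma> * a\<^sup>2"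
proof -
  obtain c0 c where orth: "ip (\<lambda>x. f x - kernel_expansion k X A c0 c x) (\<lambda>_. 1) = 0"
    and interp: "\<forall>i\<in>A. f (X i) = kernel_expansion k X A c0 c (X i)"
    using kernel_expansion_projection[OF finite_A kernel_indep_A assms] by blast
  define \<beta> where "\<beta> = (\<lambda>i. if i \<in> A then c i else 0)"
  define a where "a = c0 - f_beta_offset k n X A \<beta>"
  define r where "r = (\<lambda>x. f x - kernel_expansion k X A c0 c x)"
  have "\<beta> \<in> coords A"
    by (simp add: coords_def \<beta>_def)
  have "r \<in> H"
    using lincomb_in_H[OF assms kernel_expansion_in_H[OF finite_A], of 1 "-1"] by (simp add: r_def)
  have "kernel_expansion k X A c0 c = kernel_expansion k X A c0 \<beta>"
    unfolding kernel_expansion_def \<beta>_def by (intro ext arg_cong2[where f="(+)"] sum.cong) auto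
  then have f_eq: "f = (\<lambda>x. a + f_beta k n X A \<beta> x + r x)"
    by (simp add: r_def a_def f_beta_eq_kernel_expansion kernel_expansion_def fun_eq_iff)
  have "\<forall>j<n. r (X j) = 0"
    using residual_vanishes_on_sample[OF \<open>r \<in> H\<close>] orth interp by (simp add: r_def)
  moreover have "ip (f_beta k n X A \<beta>) r = 0"
  proof -
    have "ip (f_beta k n X A \<beta>) r = ip r (kernel_expansion k X A (f_beta_offset k n X A \<beta>) \<beta>)"
      using ip_sym[OF f_beta_in_H \<open>r \<in> H\<close>] by (simp add: f_beta_eq_kernel_expansion)
    also have "\<dots> = 0"
      using ip_kernel_expansion[OF finite_A \<open>r \<in> H\<close>] orth interp by (simp add: r_def)
    finally show ?thesis .
  qed
  ultimately show ?thesis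
    using that[OF \<open>\<beta> \<in> coords A\<close> \<open>r \<in> H\<close> f_eq] ell_pen_orthogonal_split[OF \<open>r \<in> H\<close>] f_eq by simp
qed

lemma ell_pen_beta_min_le:
  assumes "\<beta> \<in> coords A" "\<forall>\<beta>'\<in>coords A. ell_pen_beta \<beta> \<le> ell_pen_beta \<beta>'" "f \<in> H"
  shows "ell_pen_beta \<beta> \<le> ell_pen ip \<gamma> n X T I f"
proof -
  obtain \<beta>' a r where "\<beta>' \<in> coords A" "r \<in> H"
    and decomp: "ell_pen ip \<gamma> n X T I f = ell_pen_beta \<beta>' + \<gamma> * ip r r + \<gamma> * a\<^sup>2"
    using ell_pen_decomposition[OF assms(3)] by blast
  moreover have "0 \<le> \<gamma> * ip r r + \<gamma> * a\<^sup>2"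
    using \<gamma>_pos ip_self_nonneg[OF \<open>r \<in> H\<close>] by simp
  ultimately show ?thesis
    using assms(2) by fastforce
qed

lemma ell_pen_min_eq_f_beta:
  assumes "\<beta> \<in> coords A" "\<forall>\<beta>'\<in>coords A. ell_pen_beta \<beta> \<le> ell_pen_beta \<beta>'"
    and "f \<in> H" "\<forall>g\<in>H. ell_pen ip \<gamma> n X T I f \<le> ell_pen ip \<gamma> n X T I g"
  shows "f = f_beta k n X A \<beta>"
proof -
  obtain \<beta>' a r where "\<beta>' \<in> coords A" "r \<in> H" and f_eq: "f = (\<lambda>x. a + f_beta k n X A \<beta>' x + r x)"
    and decomp: "ell_pen ip \<gamma> n X T I f = ell_pen_beta \<beta>' + \<gamma> * ip r r + \<gamma> * a\<^sup>2"
    using ell_pen_decomposition[OF assms(3)] by blast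
  have "ell_pen ip \<gamma> n X T I f \<le> ell_pen_beta \<beta>"
    using assms(4) f_beta_in_H by blast
  moreover have "ell_pen_beta \<beta> \<le> ell_pen_beta \<beta>'"
    using assms(2) \<open>\<beta>' \<in> coords A\<close> by blast
  moreover have "0 \<le> \<gamma> * ip r r" "0 \<le> \<gamma> * a\<^sup>2"
    using \<gamma>_pos ip_self_nonneg[OF \<open>r \<in> H\<close>] by simp_all
  ultimately have "\<gamma> * ip r r = 0" "\<gamma> * a\<^sup>2 = 0" "ell_pen_beta \<beta>' \<le> ell_pen_beta \<beta>"
    using decomp by linarith+
  then have "r = (\<lambda>_. 0)" "a = 0"
    using \<gamma>_pos ip_self_eq_0[OF \<open>r \<in> H\<close>] by simp_all
  moreover have "\<beta>' = \<beta>"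
    using ell_pen_beta_min_unique[OF \<open>\<beta>' \<in> coords A\<close> _ assms(1,2)] assms(2) \<open>ell_pen_beta \<beta>' \<le> ell_pen_beta \<beta>\<close>
    by fastforce
  ultimately show ?thesis
    using f_eq by simp
qed

end

theorem proposition1:
  fixes k :: "'a::metric_space \<Rightarrow> 'a \<Rightarrow> real"
    and H :: "('a \<Rightarrow> real) set"
    and ip :: "('a \<Rightarrow> real) \<Rightarrow> ('a \<Rightarrow> real) \<Rightarrow> real"
    and \<delta> \<gamma> :: real
    and n :: nat
    and X :: "nat \<Rightarrow> 'a" and T :: "nat \<Rightarrow> real" and I :: "nat \<Rightarrow> nat"
    and A :: "nat set"
  assumes loc_compact: "locally_compact_space (euclidean :: 'a topology)"
    and sigma: "\<forall>U::'a set. open U \<longrightarrow> sigma_compact U"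
    and k_cont: "continuous_on UNIV (\<lambda>p::'a \<times> 'a. k (fst p) (snd p))"
    and k_sym: "\<forall>x y. k x y = k y x"
    and k_psd: "psd_kernel k"
    and H_rkhs: "rkhs k H ip"
    and \<delta>_pos: "\<delta> > 0"
    and k_\<delta>: "psd_kernel (\<lambda>x y. k x y - \<delta>)"
    and one_in_H: "(\<lambda>_. 1) \<in> H"
    and n_pos: "n > 0"
    and T_pos: "\<forall>i<n. T i > 0"
    and I_bin: "\<forall>i<n. I i \<in> {0, 1}"
    and \<gamma>_pos: "\<gamma> > 0"
    and A_sub: "A \<subseteq> {..<n}"
    and A_indep: "indep_family ip k n X A"
    and A_max: "\<forall>B. A \<subset> B \<and> B \<subseteq> {..<n} \<longrightarrow> \<not> indep_family ip k n X B"
  shows "strongly_convex_coords A (\<lambda>\<beta>. ell_pen ip \<gamma> n X T I (f_beta k n X A \<beta>))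
    \<and> (\<exists>!\<beta>. \<beta> \<in> coords A \<and>
          (\<forall>\<beta>'\<in>coords A. ell_pen ip \<gamma> n X T I (f_beta k n X A \<beta>)
                            \<le> ell_pen ip \<gamma> n X T I (f_beta k n X A \<beta>')))
    \<and> (\<forall>\<beta>. \<beta> \<in> coords A \<and>
          (\<forall>\<beta>'\<in>coords A. ell_pen ip \<gamma> n X T I (f_beta k n X A \<beta>)
                            \<le> ell_pen ip \<gamma> n X T I (f_beta k n X A \<beta>'))
        \<longrightarrow> f_beta k n X A \<beta> \<in> H
          \<and> (\<forall>f\<in>H. ell_pen ip \<gamma> n X T I (f_beta k n X A \<beta>) \<le> ell_pen ip \<gamma> n X T I f)
          \<and> (\<forall>f\<in>H. (\<forall>g\<in>H. ell_pen ip \<gamma> n X T I f \<le> ell_pen ip \<gamma> n X T I g)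
                     \<longrightarrow> f = f_beta k n X A \<beta>))"
proof -
  interpret cox_setting k H ip n X T I A \<gamma>
    using H_rkhs one_in_H k_sym n_pos \<gamma>_pos A_sub A_indep A_max by unfold_locales auto
  have "\<exists>!\<beta>. \<beta> \<in> coords A \<and> (\<forall>\<beta>'\<in>coords A. ell_pen_beta \<beta> \<le> ell_pen_beta \<beta>')"
    using ell_pen_beta_has_min ell_pen_beta_min_unique by blast
  then show ?thesis
    using ell_pen_beta_strongly_convex f_beta_in_H ell_pen_beta_min_le ell_pen_min_eq_f_beta by blast
qed

end
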